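(* For $k\in\{1,\dots,m\}$ let $A_k\in\mathbb{R}^n$ with $\|A_k\|>0$ and $b_k\in\mathbb{R}$, and let $f(X)=\max_{k\in\{1,\dots,m\}}\left(A_k^TX+b_k\right)$. Let $X_0\in\mathbb{R}^n$ and $R>0$ be such that for all $X$ in the open ball $B(X_0,R)$: (1) $0\notin\partial f(X)$, and (2) every $d_X\in\partial f(X)$ satisfies $\|d_X\|\ge\underline{d}$, where $\underline{d}>0$ is a fixed constant. Then there exists $X\in B(X_0,R)$ such that $$f(X)\le f(X_0)-\underline{d}\cdot\frac{R}{2}.$$
   Context: $\partial f(X)$ denotes the subdifferential of the convex function $f$ at $X$. The function $f$ is the standing function of the paper's section, the maximum of the affine functions $A_k^TX+b_k$. *)

theory Defs
  imports "HOL-Analysis.Analysis"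
begin

definition subdifferential :: "('a::real_inner \<Rightarrow> real) \<Rightarrow> 'a \<Rightarrow> 'a set" where
  "subdifferential f x = {g. \<forall>y. f y \<ge> f x + g \<bullet> (y - x)}"

definition maxaffine :: "(nat \<Rightarrow> real ^ 'n) \<Rightarrow> (nat \<Rightarrow> real) \<Rightarrow> nat \<Rightarrow> real ^ 'n \<Rightarrow> real" where
  "maxaffine A b m X = Max ((\<lambda>k. A k \<bullet> X + b k) ` {1..m})"

end

theory Submission
  imports Defs
begin

(* Proximal point iteration. For lam > 0 a minimizer Z of f + lam/2 * norm (_ - Y)^2 satisfies
   lam (Y - Z) \<in> subdifferential f Z, hence f Z \<le> f Y - lam * dist Y Z^2, and dist Y Z \<le> L/lam when
   f is L-Lipschitz. Inside the ball the subgradient bound gives lam * dist Y Z \<ge> dlow, so every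
   step has length at least dlow/lam and decreases f by at least dlow times its length. With
   lam = 4L/R the steps have length at most R/4, so iterating from X0 until the travelled length
   first reaches R/2 stays inside ball X0 R and lowers f by at least dlow * R/2. *)

lemma convex_on_Max:
  fixes g :: "'i \<Rightarrow> 'a::real_vector \<Rightarrow> real"
  assumes "finite I" "I \<noteq> {}" and convex: "\<And>i. i \<in> I \<Longrightarrow> convex_on S (g i)"
  shows "convex_on S (\<lambda>x. Max ((\<lambda>i. g i x) ` I))"
proof (rule convex_onI)
  show "convex S"
    using assms(2) convex convex_on_imp_convex by blast
  fix t :: real and x y assume t: "0 < t" "t < 1" and xy: "x \<in> S" "y \<in> S"
  have "g i ((1 - t) *\<^sub>R x + t *\<^sub>R y) \<le> (1 - t) * Max ((\<lambda>i. g i x) ` I) + t * Max ((\<lambda>i. g i y) ` I)"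
    if i: "i \<in> I" for i
  proof -
    have "g i ((1 - t) *\<^sub>R x + t *\<^sub>R y) \<le> (1 - t) * g i x + t * g i y"
      using convex_onD[OF convex[OF i]] t xy by simp
    also have "\<dots> \<le> (1 - t) * Max ((\<lambda>i. g i x) ` I) + t * Max ((\<lambda>i. g i y) ` I)"
      using t i assms(1) by (intro add_mono mult_left_mono Max_ge) auto
    finally show ?thesis .
  qed
  then show "Max ((\<lambda>i. g i ((1 - t) *\<^sub>R x + t *\<^sub>R y)) ` I)
      \<le> (1 - t) * Max ((\<lambda>i. g i x) ` I) + t * Max ((\<lambda>i. g i y) ` I)"
    using assms(1,2) by (subst Max_le_iff) auto
qed

lemma lipschitz_on_Max:
  fixes g :: "'i \<Rightarrow> 'a::metric_space \<Rightarrow> real"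
  assumes "finite I" "I \<noteq> {}" and lip: "\<And>i. i \<in> I \<Longrightarrow> L-lipschitz_on S (g i)"
  shows "L-lipschitz_on S (\<lambda>x. Max ((\<lambda>i. g i x) ` I))"
proof (rule lipschitz_onI)
  show "0 \<le> L"
    using assms(2) lip lipschitz_on_nonneg by blast
  have Max_le: "Max ((\<lambda>i. g i x) ` I) \<le> Max ((\<lambda>i. g i y) ` I) + L * dist x y"
    if xy: "x \<in> S" "y \<in> S" for x y
  proof -
    have "g i x \<le> Max ((\<lambda>i. g i y) ` I) + L * dist x y" if i: "i \<in> I" for i
    proof -
      have "g i x \<le> g i y + L * dist x y"
        using lipschitz_onD[OF lip[OF i] xy] by (simp add: dist_real_def)
      also have "g i y \<le> Max ((\<lambda>i. g i y) ` I)"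
        using i assms(1) by (intro Max_ge) auto
      finally show ?thesis by simp
    qed
    then show ?thesis
      using assms(1,2) by (subst Max_le_iff) auto
  qed
  fix x y assume "x \<in> S" "y \<in> S"
  then show "dist (Max ((\<lambda>i. g i x) ` I)) (Max ((\<lambda>i. g i y) ` I)) \<le> L * dist x y"
    using Max_le[of x y] Max_le[of y x] by (simp add: dist_real_def dist_commute abs_le_iff)
qed

lemma convex_on_inner_affine: "convex S \<Longrightarrow> convex_on S (\<lambda>x. a \<bullet> x + c)"
  by (rule convex_onI) (simp_all add: inner_add_right algebra_simps)

lemma lipschitz_on_inner_affine: "(norm a)-lipschitz_on S (\<lambda>x. a \<bullet> x + c)"
proof (rule lipschitz_onI)
  fix x y
  have "\<bar>a \<bullet> (x - y)\<bar> \<le> norm a * norm (x - y)"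
    by (rule Cauchy_Schwarz_ineq2)
  then show "dist (a \<bullet> x + c) (a \<bullet> y + c) \<le> norm a * dist x y"
    by (simp add: dist_real_def dist_norm inner_diff_right)
qed simp

lemma convex_on_maxaffine: "m \<ge> 1 \<Longrightarrow> convex_on UNIV (maxaffine A b m)"
  unfolding maxaffine_def by (intro convex_on_Max convex_on_inner_affine) auto

lemma lipschitz_on_maxaffine:
  assumes "m \<ge> 1"
  shows "(MAX k\<in>{1..m}. norm (A k))-lipschitz_on UNIV (maxaffine A b m)"
  unfolding maxaffine_def
proof (intro lipschitz_on_Max)
  fix k assume "k \<in> {1..m}"
  then show "(MAX k\<in>{1..m}. norm (A k))-lipschitz_on UNIV (\<lambda>x. A k \<bullet> x + b k)"
    by (intro lipschitz_on_le[OF lipschitz_on_inner_affine] Max_ge) auto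
qed (use assms in auto)

lemma prox_minimizer_exists:
  fixes f :: "'a::euclidean_space \<Rightarrow> real"
  assumes lip: "L-lipschitz_on UNIV f" and "lam > 0"
  shows "\<exists>Z. \<forall>x. f Z + lam/2 * (norm (Z - Y))\<^sup>2 \<le> f x + lam/2 * (norm (x - Y))\<^sup>2"
proof -
  define h where "h x = f x + lam/2 * (norm (x - Y))\<^sup>2" for x
  have radius_nonneg: "0 \<le> 2*L/lam"
    using lipschitz_on_nonneg[OF lip] \<open>lam > 0\<close> by simp
  have "continuous_on (cball Y (2*L/lam)) h"
    unfolding h_def using lipschitz_on_continuous_on[OF lip]
    by (intro continuous_intros) (auto intro: continuous_on_subset)
  moreover have "cball Y (2*L/lam) \<noteq> {}"
    using radius_nonneg by simp
  ultimately obtain Z where Zmin: "\<And>x. x \<in> cball Y (2*L/lam) \<Longrightarrow> h Z \<le> h x"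
    using continuous_attains_inf[OF compact_cball] by metis
  \<comment> \<open>Outside the ball h exceeds h Y, so the minimizer over the ball is global.\<close>
  have "h Z \<le> h x" for x
  proof (cases "x \<in> cball Y (2*L/lam)")
    case False
    define r where "r = norm (x - Y)"
    have "2*L/lam < r"
      using False by (simp add: r_def dist_norm norm_minus_commute)
    then have "2*L \<le> lam * r"
      using \<open>lam > 0\<close> by (simp add: field_simps)
    then have "L * r \<le> lam/2 * r\<^sup>2"
      using mult_right_mono[of "2*L" "lam * r" r] by (simp add: r_def power2_eq_square)
    moreover have "f Y \<le> f x + L * r"
      using lipschitz_onD[OF lip, of Y x] by (simp add: r_def dist_real_def dist_norm norm_minus_commute)
    moreover have "h Z \<le> f Y"
      using Zmin[of Y] radius_nonneg by (simp add: h_def)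
    ultimately show ?thesis
      by (simp add: h_def r_def)
  qed (rule Zmin)
  then show ?thesis
    unfolding h_def by blast
qed

lemma prox_minimizer_subgradient:
  fixes f :: "'a::real_inner \<Rightarrow> real"
  assumes convex: "convex_on UNIV f"
    and min: "\<And>x. f Z + lam/2 * (norm (Z - Y))\<^sup>2 \<le> f x + lam/2 * (norm (x - Y))\<^sup>2"
  shows "lam *\<^sub>R (Y - Z) \<in> subdifferential f Z"
  unfolding subdifferential_def
proof (intro CollectI allI)
  fix y
  define v where "v = y - Z"
  have "lam * (v \<bullet> (Y - Z)) - t * (lam/2 * (norm v)\<^sup>2) \<le> f y - f Z" if t: "0 < t" "t < 1" for t
  proof -
    have "f (Z + t *\<^sub>R v) \<le> f Z + t * (f y - f Z)"
      using convex_onD[OF convex, of t Z y] t by (simp add: v_def algebra_simps)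
    moreover have "(norm (Z + t *\<^sub>R v - Y))\<^sup>2 = (norm (Z - Y))\<^sup>2 - 2 * t * (v \<bullet> (Y - Z)) + t\<^sup>2 * (norm v)\<^sup>2"
      by (simp only: power2_norm_eq_inner)
        (simp add: inner_diff_left inner_diff_right inner_add_left inner_add_right
          inner_commute power2_eq_square algebra_simps)
    ultimately have "0 \<le> (f Z + t * (f y - f Z)) + lam/2 * ((norm (Z - Y))\<^sup>2 - 2 * t * (v \<bullet> (Y - Z)) + t\<^sup>2 * (norm v)\<^sup>2)
        - (f Z + lam/2 * (norm (Z - Y))\<^sup>2)"
      using min[of "Z + t *\<^sub>R v"] by simp
    also have "\<dots> = t * ((f y - f Z) - lam * (v \<bullet> (Y - Z)) + t * (lam/2 * (norm v)\<^sup>2))"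
      by (simp add: algebra_simps power2_eq_square)
    finally show ?thesis
      using t by (simp add: zero_le_mult_iff)
  qed
  then have "lam * (v \<bullet> (Y - Z)) \<le> f y - f Z"
    by (intro tendsto_le[OF trivial_limit_at_right_real tendsto_const,
          of "\<lambda>t. lam * (v \<bullet> (Y - Z)) - t * (lam/2 * (norm v)\<^sup>2)" _ 0])
      (auto intro!: tendsto_eq_intros eventually_mono[OF eventually_at_right_real[of 0 1]])
  then show "f Z + lam *\<^sub>R (Y - Z) \<bullet> (y - Z) \<le> f y"
    by (simp add: v_def inner_commute)
qed

lemma prox_descent_step:
  fixes f :: "'a::euclidean_space \<Rightarrow> real"
  assumes convex: "convex_on UNIV f" and lip: "L-lipschitz_on UNIV f" and "0 < lam"
    and grad: "\<And>Z g. Z \<in> cball X (L/lam) \<Longrightarrow> g \<in> subdifferential f Z \<Longrightarrow> dlow \<le> norm g"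
  shows "\<exists>Z. dlow/lam \<le> dist X Z \<and> dist X Z \<le> L/lam \<and> f Z \<le> f X - dlow * dist X Z"
proof -
  obtain Z where "\<forall>x. f Z + lam/2 * (norm (Z - X))\<^sup>2 \<le> f x + lam/2 * (norm (x - X))\<^sup>2"
    using prox_minimizer_exists[OF lip \<open>0 < lam\<close>] by blast
  then have subgrad: "lam *\<^sub>R (X - Z) \<in> subdifferential f Z"
    using prox_minimizer_subgradient[OF convex] by blast
  define d where "d = dist X Z"
  have decrease: "f Z + lam * d\<^sup>2 \<le> f X"
    using subgrad unfolding subdifferential_def
    by (simp add: d_def dist_norm power2_norm_eq_inner)
  moreover have "f X \<le> f Z + L * d"
    using lipschitz_onD[OF lip, of X Z] by (simp add: d_def dist_real_def)
  ultimately have "lam * d * d \<le> L * d"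
    by (simp add: power2_eq_square)
  then have d_le: "d \<le> L/lam"
    using \<open>0 < lam\<close> lipschitz_on_nonneg[OF lip]
    by (cases "d = 0") (auto simp: d_def field_simps)
  then have "dlow \<le> lam * d"
    using grad[OF _ subgrad] \<open>0 < lam\<close> by (simp add: d_def dist_norm)
  moreover have "0 \<le> d"
    by (simp add: d_def)
  ultimately have "dlow/lam \<le> d" and "dlow * d \<le> lam * d\<^sup>2"
    using \<open>0 < lam\<close> mult_right_mono[of dlow "lam * d" d] by (auto simp: field_simps power2_eq_square)
  then show ?thesis
    using d_le decrease unfolding d_def by (intro exI[of _ Z]) auto
qed

lemma descent_steps_reach_radius:
  fixes f :: "'a::metric_space \<Rightarrow> real"
  assumes "0 < \<delta>" "0 < r" "0 \<le> h"
    and step: "\<And>X. dist X0 X < r \<Longrightarrow> \<exists>Z. \<delta> \<le> dist X Z \<and> dist X Z \<le> h \<and> f Z \<le> f X - c * dist X Z"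
  shows "\<exists>X s. r \<le> s \<and> s < r + h \<and> dist X0 X \<le> s \<and> f X \<le> f X0 - c * s"
proof -
  have "\<exists>X s. min (real n * \<delta>) r \<le> s \<and> s < r + h \<and> dist X0 X \<le> s \<and> f X \<le> f X0 - c * s" for n
  proof (induction n)
    case 0
    show ?case
      using assms(2,3) by (intro exI[of _ X0] exI[of _ 0]) auto
  next
    case (Suc n)
    then obtain X s where Xs: "min (real n * \<delta>) r \<le> s" "s < r + h" "dist X0 X \<le> s" "f X \<le> f X0 - c * s"
      by blast
    show ?case
    proof (cases "r \<le> s")
      case True
      then show ?thesis
        using Xs by (intro exI[of _ X] exI[of _ s]) auto
    next
      case False
      then obtain Z where Z: "\<delta> \<le> dist X Z" "dist X Z \<le> h" "f Z \<le> f X - c * dist X Z"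
        using step[of X] Xs(3) by auto
      have "dist X0 Z \<le> s + dist X Z"
        using dist_triangle[of X0 Z X] Xs(3) by linarith
      moreover have "min (real (Suc n) * \<delta>) r \<le> s + dist X Z"
        using Xs(1) False Z(1) by (auto simp: min_def algebra_simps split: if_splits)
      ultimately show ?thesis
        using Xs Z False by (intro exI[of _ Z] exI[of _ "s + dist X Z"]) (auto simp: algebra_simps)
    qed
  qed
  moreover obtain n :: nat where "r / \<delta> \<le> n"
    using real_arch_simple by blast
  then have "r \<le> real n * \<delta>"
    using \<open>0 < \<delta>\<close> by (simp add: field_simps)
  ultimately show ?thesis
    by (metis min.absorb2)
qed

theorem convex_lipschitz_descent_in_ball:
  fixes f :: "'a::euclidean_space \<Rightarrow> real"
  assumes convex: "convex_on UNIV f" and lip: "L-lipschitz_on UNIV f"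
    and "0 < R" "0 < dlow"
    and grad: "\<forall>X\<in>ball X0 R. \<forall>g\<in>subdifferential f X. dlow \<le> norm g"
  shows "\<exists>X\<in>ball X0 R. f X \<le> f X0 - dlow * (R/2)"
proof -
  define K where "K = L + 1"
  have "0 < K" and lipK: "K-lipschitz_on UNIV f"
    using lipschitz_on_nonneg[OF lip] lipschitz_on_le[OF lip] by (auto simp: K_def)
  define lam where "lam = 4 * K / R"
  have "0 < lam" and radius: "K / lam = R/4"
    using \<open>0 < K\<close> \<open>0 < R\<close> by (auto simp: lam_def)
  have "\<exists>Z. dlow/lam \<le> dist X Z \<and> dist X Z \<le> R/4 \<and> f Z \<le> f X - dlow * dist X Z"
    if "dist X0 X < R/2" for X
  proof -
    have "cball X (K/lam) \<subseteq> ball X0 R"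
    proof
      fix Z assume "Z \<in> cball X (K/lam)"
      then have "dist X0 Z \<le> dist X0 X + R/4"
        using dist_triangle[of X0 Z X] radius by simp
      then show "Z \<in> ball X0 R"
        using that \<open>0 < R\<close> by simp
    qed
    then show ?thesis
      using prox_descent_step[OF convex lipK \<open>0 < lam\<close>, of X dlow] grad
      unfolding radius by blast
  qed
  then obtain X s where "R/2 \<le> s" "s < R/2 + R/4" "dist X0 X \<le> s" "f X \<le> f X0 - dlow * s"
    using descent_steps_reach_radius[of "dlow/lam" "R/2" "R/4" X0 f dlow] \<open>0 < lam\<close> assms(3,4)
    by auto
  moreover have "dlow * (R/2) \<le> dlow * s"
    using \<open>R/2 \<le> s\<close> \<open>0 < dlow\<close> by simp
  ultimately show ?thesis
    by (intro bexI[of _ X]) auto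
qed

theorem lemma2p3:
  fixes A :: "nat \<Rightarrow> real ^ 'n" and b :: "nat \<Rightarrow> real" and m :: nat
    and X0 :: "real ^ 'n" and R dlow :: real
  assumes "m \<ge> 1"
    and "\<forall>k\<in>{1..m}. norm (A k) > 0"
    and "R > 0" and "dlow > 0"
    and "\<forall>X\<in>ball X0 R. 0 \<notin> subdifferential (maxaffine A b m) X"
    and "\<forall>X\<in>ball X0 R. \<forall>d\<in>subdifferential (maxaffine A b m) X. norm d \<ge> dlow"
  shows "\<exists>X\<in>ball X0 R. maxaffine A b m X \<le> maxaffine A b m X0 - dlow * (R / 2)"
  \<comment> \<open>The hypotheses on norm (A k) and on 0 are not needed; the latter follows from the last one.\<close>
  using convex_lipschitz_descent_in_ball[OF convex_on_maxaffine[OF assms(1)]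
      lipschitz_on_maxaffine[OF assms(1)] assms(3,4,6)] .

end
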